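(* Let $D\subset\mathbb{C}$ be a domain, let $h$ be holomorphic on $D$ with $h'$ nowhere zero, and put $g(w)=1/h'(w)$, $w=x+iy$. Let $\varphi(x,y)=\operatorname{Re} h(w)$ and $\psi(x,y)=\frac{\operatorname{Re} g'(w)}{|g(w)|^2}$. Then $\psi$ depends only on $\varphi$ (i.e. the Jacobian $\frac{\partial(\varphi,\psi)}{\partial(x,y)}$ vanishes identically on $D$) if and only if $$g\,g''-(g')^2=c$$ on $D$ for some real constant $c$. *)

theory Defs
  imports "HOL-Complex_Analysis.Complex_Analysis"
begin

definition jacobian2 :: "(real \<Rightarrow> real \<Rightarrow> real) \<Rightarrow> (real \<Rightarrow> real \<Rightarrow> real) \<Rightarrow> real \<Rightarrow> real \<Rightarrow> real" where
  "jacobian2 f1 f2 x y =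
     deriv (\<lambda>s. f1 s y) x * deriv (\<lambda>t. f2 x t) y
   - deriv (\<lambda>t. f1 x t) y * deriv (\<lambda>s. f2 s y) x"

end

theory Submission
  imports Defs
begin

(* Encode the gradient of a real function u of (x,y) as the complex number u_x + i u_y.
   For holomorphic F one has grad (Re F) = cnj F' and grad |F|^2 = 2 F cnj F', and the
   Jacobian of (u,v) is Im (cnj (grad u) * grad v). With h' = 1/g this gives
   J(phi,psi) = - Im (g g'' - g'^2) / |g|^4, so the Jacobian vanishes exactly when the
   holomorphic function g g'' - g'^2 is real-valued, which on a domain forces it to be a real
   constant by the open mapping theorem. *)

definition has_gradient :: "(real \<Rightarrow> real \<Rightarrow> real) \<Rightarrow> complex \<Rightarrow> real \<Rightarrow> real \<Rightarrow> bool" where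
  "has_gradient f G x y \<longleftrightarrow>
     ((\<lambda>s. f s y) has_real_derivative Re G) (at x) \<and> ((\<lambda>t. f x t) has_real_derivative Im G) (at y)"

lemma jacobian2_eq_Im_cnj_mult:
  assumes "has_gradient f A x y" and "has_gradient g B x y"
  shows "jacobian2 f g x y = Im (cnj A * B)"
proof -
  have "deriv (\<lambda>s. f s y) x = Re A" "deriv (\<lambda>t. f x t) y = Im A"
       "deriv (\<lambda>s. g s y) x = Re B" "deriv (\<lambda>t. g x t) y = Im B"
    using assms by (simp_all add: has_gradient_def DERIV_imp_deriv)
  then show ?thesis by (simp add: jacobian2_def)
qed

lemma has_gradient_add:
  assumes "has_gradient f A x y" and "has_gradient g B x y"
  shows "has_gradient (\<lambda>x y. f x y + g x y) (A + B) x y"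
  using assms by (auto simp: has_gradient_def intro!: derivative_eq_intros)

lemma has_gradient_mult:
  assumes "has_gradient f A x y" and "has_gradient g B x y"
  shows "has_gradient (\<lambda>x y. f x y * g x y) (of_real (f x y) * B + of_real (g x y) * A) x y"
  using assms by (auto simp: has_gradient_def intro!: derivative_eq_intros)

lemma has_gradient_divide:
  assumes "has_gradient f A x y" and "has_gradient g B x y" and "g x y \<noteq> 0"
  shows "has_gradient (\<lambda>x y. f x y / g x y)
           ((of_real (g x y) * A - of_real (f x y) * B) / of_real ((g x y)\<^sup>2)) x y"
  using assms
  by (auto simp: has_gradient_def power2_eq_square intro!: derivative_eq_intros)

lemma has_vector_derivative_along_line:
  assumes "(F has_field_derivative F') (at (z + of_real t * v))"
  shows "((\<lambda>t. F (z + of_real t * v)) has_vector_derivative F' * v) (at t)"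
proof -
  have "((\<lambda>t. z + of_real t * v) has_vector_derivative v) (at t)"
    by (auto intro!: derivative_eq_intros)
  from field_vector_diff_chain_at[OF this assms] show ?thesis
    by (simp add: o_def mult.commute)
qed

lemma has_gradient_Re:
  assumes "(F has_field_derivative F') (at (Complex x y))"
  shows "has_gradient (\<lambda>x y. Re (F (Complex x y))) (cnj F') x y"
proof -
  have "((\<lambda>s. F (Complex s y)) has_vector_derivative F') (at x)"
       "((\<lambda>t. F (Complex x t)) has_vector_derivative \<i> * F') (at y)"
    using has_vector_derivative_along_line[of F F' "\<i> * of_real y" x 1]
          has_vector_derivative_along_line[of F F' "of_real x" y \<i>] assms
    by (simp_all add: Complex_eq add.commute mult.commute)
  then show ?thesis
    by (auto simp: has_gradient_def dest!: has_field_derivative_Re)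
qed

lemma has_gradient_Im:
  assumes "(F has_field_derivative F') (at (Complex x y))"
  shows "has_gradient (\<lambda>x y. Im (F (Complex x y))) (\<i> * cnj F') x y"
proof -
  have "((\<lambda>z. - \<i> * F z) has_field_derivative - \<i> * F') (at (Complex x y))"
    using assms by (auto intro!: derivative_eq_intros)
  from has_gradient_Re[OF this] show ?thesis by simp
qed

lemma has_gradient_cmod_power2:
  assumes "(F has_field_derivative F') (at (Complex x y))"
  shows "has_gradient (\<lambda>x y. (cmod (F (Complex x y)))\<^sup>2) (2 * F (Complex x y) * cnj F') x y"
proof -
  have "has_gradient (\<lambda>x y. Re (F (Complex x y)) * Re (F (Complex x y))
                            + Im (F (Complex x y)) * Im (F (Complex x y)))
          (2 * of_real (Re (F (Complex x y))) * cnj F' + 2 * of_real (Im (F (Complex x y))) * (\<i> * cnj F')) x y"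
    using has_gradient_add[OF has_gradient_mult has_gradient_mult,
        OF has_gradient_Re has_gradient_Re
           has_gradient_Im has_gradient_Im, OF assms assms assms assms]
    by (simp add: algebra_simps)
  moreover have "2 * of_real (Re z) * w + 2 * of_real (Im z) * (\<i> * w) = 2 * z * w" for z w
    by (simp add: complex_eq_iff algebra_simps)
  moreover have "(cmod z)\<^sup>2 = Re z * Re z + Im z * Im z" for z
    using cmod_power2[of z] by (simp add: power2_eq_square)
  ultimately show ?thesis
    by simp
qed

lemma Im_inverse_mult_gradient_quotient:
  fixes g g' g'' :: complex
  assumes "g \<noteq> 0"
  defines "N \<equiv> (cmod g)\<^sup>2"
  shows "Im (inverse g * ((of_real N * cnj g'' - of_real (Re g') * (2 * g * cnj g')) / of_real (N\<^sup>2)))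
           = - Im (g * g'' - g'\<^sup>2) / (cmod g) ^ 4"
proof -
  have "of_real N = g * cnj g"
    unfolding N_def by (rule complex_norm_square)
  then have "inverse g * of_real N = cnj g"
    using assms by (simp add: field_simps)
  then have "inverse g * (of_real N * cnj g'' - of_real (Re g') * (2 * g * cnj g'))
               = cnj (g * g'') - 2 * of_real (Re g') * cnj g'"
    using assms by (simp add: algebra_simps)
  moreover have "Im (cnj (g * g'') - 2 * of_real (Re g') * cnj g') = - Im (g * g'' - g'\<^sup>2)"
    by (simp add: power2_eq_square algebra_simps)
  moreover have "N\<^sup>2 = (cmod g) ^ 4"
    by (simp add: N_def flip: power_mult)
  ultimately show ?thesis
    by (simp only: times_divide_eq_right Im_divide_of_real)
qed

lemma jacobian2_Re_div_cmod_power2_eq_Im: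
  fixes h g g' g'' :: "complex \<Rightarrow> complex" and x y :: real
  defines "z \<equiv> Complex x y"
  assumes dh: "(h has_field_derivative inverse (g z)) (at z)"
    and dg: "(g has_field_derivative g' z) (at z)"
    and dg': "(g' has_field_derivative g'' z) (at z)"
    and nz: "g z \<noteq> 0"
  shows "jacobian2 (\<lambda>x y. Re (h (Complex x y)))
           (\<lambda>x y. Re (g' (Complex x y)) / (cmod (g (Complex x y)))\<^sup>2) x y
         = - Im (g z * g'' z - (g' z)\<^sup>2) / (cmod (g z)) ^ 4"
proof -
  define G where "G = (of_real ((cmod (g z))\<^sup>2) * cnj (g'' z)
      - of_real (Re (g' z)) * (2 * g z * cnj (g' z))) / of_real (((cmod (g z))\<^sup>2)\<^sup>2)"
  have "has_gradient (\<lambda>x y. Re (g' (Complex x y)) / (cmod (g (Complex x y)))\<^sup>2) G x y"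
    using has_gradient_divide[OF has_gradient_Re has_gradient_cmod_power2]
      dg dg' nz by (simp add: z_def G_def)
  from jacobian2_eq_Im_cnj_mult[OF has_gradient_Re[OF dh[unfolded z_def]] this]
  have "jacobian2 (\<lambda>x y. Re (h (Complex x y)))
          (\<lambda>x y. Re (g' (Complex x y)) / (cmod (g (Complex x y)))\<^sup>2) x y = Im (inverse (g z) * G)"
    by (simp add: z_def)
  also have "\<dots> = - Im (g z * g'' z - (g' z)\<^sup>2) / (cmod (g z)) ^ 4"
    unfolding G_def by (rule Im_inverse_mult_gradient_quotient[OF nz])
  finally show ?thesis .
qed

lemma holomorphic_real_valued_imp_constant:
  assumes "K holomorphic_on D" and "open D" and "connected D"
    and real_valued: "\<forall>w\<in>D. Im (K w) = 0"
  shows "\<exists>c::real. \<forall>w\<in>D. K w = of_real c"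
proof (cases "D = {}")
  case False
  then obtain w0 where w0: "w0 \<in> D" by auto
  have "K constant_on D"
  proof (rule ccontr)
    assume "\<not> K constant_on D"
    with assms have "open (K ` D)" by (intro open_mapping_thm) auto
    then obtain e where e: "e > 0" "ball (K w0) e \<subseteq> K ` D"
      using w0 by (meson imageI open_contains_ball)
    have "K w0 + \<i> * of_real (e/2) \<in> ball (K w0) e"
      using e by (simp add: dist_norm norm_mult)
    then obtain w1 where "w1 \<in> D" "K w1 = K w0 + \<i> * of_real (e/2)"
      using e by auto
    then have "Im (K w1) = e/2"
      using real_valued w0 by simp
    with real_valued \<open>w1 \<in> D\<close> e show False by simp
  qed
  then obtain c where "\<forall>w\<in>D. K w = c" by (auto simp: constant_on_def)
  moreover have "c = of_real (Re c)"
    using calculation real_valued w0 by (metis complex_is_Real_iff of_real_Re)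
  ultimately show ?thesis by metis
qed simp

theorem lemma2:
  fixes D :: "complex set" and h :: "complex \<Rightarrow> complex"
  assumes "open D" and "connected D"
    and "h holomorphic_on D"
    and "\<forall>w\<in>D. deriv h w \<noteq> 0"
  defines "g \<equiv> (\<lambda>w. 1 / deriv h w)"
  defines "\<phi> \<equiv> (\<lambda>x y. Re (h (Complex x y)))"
  defines "\<psi> \<equiv> (\<lambda>x y. Re (deriv g (Complex x y)) / (cmod (g (Complex x y)))\<^sup>2)"
  shows "(\<forall>x y. Complex x y \<in> D \<longrightarrow> jacobian2 \<phi> \<psi> x y = 0) \<longleftrightarrow>
         (\<exists>c::real. \<forall>w\<in>D. g w * deriv (deriv g) w - (deriv g w)\<^sup>2 = complex_of_real c)"
proof -
  define K where "K w = g w * deriv (deriv g) w - (deriv g w)\<^sup>2" for w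
  have g: "g holomorphic_on D"
    unfolding g_def using holomorphic_deriv assms(1,3,4) by (auto intro!: holomorphic_intros)
  have g': "deriv g holomorphic_on D" and g'': "deriv (deriv g) holomorphic_on D"
    using holomorphic_deriv g assms(1) by blast+
  have "K holomorphic_on D"
    unfolding K_def using g g' g'' by (auto intro!: holomorphic_intros)
  have jacobian: "jacobian2 \<phi> \<psi> (Re w) (Im w) = - Im (K w) / (cmod (g w)) ^ 4" if "w \<in> D" for w
    unfolding \<phi>_def \<psi>_def K_def
    using jacobian2_Re_div_cmod_power2_eq_Im[of h g "Re w" "Im w"] holomorphic_derivI that
      assms(1,3,4) g g' by (simp add: g_def)
  have "(\<forall>x y. Complex x y \<in> D \<longrightarrow> jacobian2 \<phi> \<psi> x y = 0) \<longleftrightarrow> (\<forall>w\<in>D. Im (K w) = 0)"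
    using jacobian assms(4) by (fastforce simp: g_def)
  also have "\<dots> \<longleftrightarrow> (\<exists>c::real. \<forall>w\<in>D. K w = of_real c)"
    using holomorphic_real_valued_imp_constant[OF \<open>K holomorphic_on D\<close> assms(1,2)] by auto
  finally show ?thesis unfolding K_def .
qed

end
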